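(* Let $G$ be a graph and let $k\geq 3$ be an integer. A complex number $\lambda$ is an eigenvalue of the power hypergraph $G^{(k)}$ if and only if: (a) when $k=3$: some signed induced subgraph of $G$ has an eigenvalue $\beta$ with $\beta^2=\lambda^k$; (b) when $k\geq 4$: some signed subgraph of $G$ has an eigenvalue $\beta$ with $\beta^2=\lambda^k$.
   Context: Tensor eigenvalues: for a $k$-order $n$-dimensional complex tensor $T=(t_{i_1\cdots i_k})$ and $\mathbf{x}\in\mathbb{C}^n$, $T\mathbf{x}^{k-1}\in\mathbb{C}^n$ has $i$-th entry $\sum_{i_2,\dots,i_k=1}^n t_{i i_2\cdots i_k}x_{i_2}\cdots x_{i_k}$, and $\mathbf{x}^{[k-1]}=(x_1^{k-1},\dots,x_n^{k-1})^\top$. A number $\lambda\in\mathbb{C}$ is an eigenvalue of $T$ with eigenvector $\mathbf{x}$ if $\mathbf{x}\neq 0$ and $T\mathbf{x}^{k-1}=\lambda\mathbf{x}^{[k-1]}$. The adjacency tensor of a $k$-uniform hypergraph $H$ on $n$ vertices is the $k$-order $n$-dimensional tensor with $a_{i_1\cdots i_k}=\frac{1}{(k-1)!}$ if $\{i_1,\dots,i_k\}$ is an edge of $H$ and $0$ otherwise; eigenvalues of $H$ are the eigenvalues of its adjacency tensor. The $k$-power hypergraph $G^{(k)}$ of a graph $G$ is the $k$-uniform hypergraph obtained by adding $k-2$ new vertices to each edge of $G$ (distinct edges receive disjoint sets of new vertices); for $e\in E(G)$, $N_e$ denotes the set of new vertices added to $e$, so $e\cup N_e$ is a hyperedge. A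 signed graph $G_\pi$ is a graph $G=(V,E)$ with a sign function $\pi:E\to\{+1,-1\}$; its adjacency matrix is the symmetric matrix with $(i,j)$ entry $\pi(i,j)$ if $i\sim j$ and $0$ otherwise, and its eigenvalues are those of this matrix. A signed (induced) subgraph of $G$ is a signed graph $\widehat G_\pi$ where $\widehat G$ is an (induced) subgraph of $G$ and $\pi$ is any sign function on $E(\widehat G)$. *)

theory Defs
  imports Complex_Main
begin

definition graph :: "'a set \<Rightarrow> 'a set set \<Rightarrow> bool" where
  "graph V E \<longleftrightarrow> finite V \<and> (\<forall>e\<in>E. e \<subseteq> V \<and> card e = 2)"

definition adj_tensor :: "nat \<Rightarrow> 'v set set \<Rightarrow> 'v list \<Rightarrow> complex" where
  "adj_tensor k F is = (if set is \<in> F then 1 / of_nat (fact (k - 1)) else 0)"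

definition hyp_eigenvalue :: "nat \<Rightarrow> 'v set \<Rightarrow> 'v set set \<Rightarrow> complex \<Rightarrow> bool" where
  "hyp_eigenvalue k W F lam \<longleftrightarrow>
     (\<exists>x :: 'v \<Rightarrow> complex. (\<exists>i\<in>W. x i \<noteq> 0) \<and>
        (\<forall>i\<in>W. (\<Sum>is\<in>{is. length is = k - 1 \<and> set is \<subseteq> W}.
                    adj_tensor k F (i # is) * prod_list (map x is)) = lam * x i ^ (k - 1)))"

text \<open>The k-power hypergraph G^(k): the new vertices of edge e are Inr (e, j), j < k-2.\<close>
definition new_vertices :: "'a set \<Rightarrow> nat \<Rightarrow> ('a + 'a set \<times> nat) set" where
  "new_vertices e k = {Inr (e, j) | j. j < k - 2}"

definition pow_vertices :: "'a set \<Rightarrow> 'a set set \<Rightarrow> nat \<Rightarrow> ('a + 'a set \<times> nat) set" where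
  "pow_vertices V E k = Inl ` V \<union> (\<Union>e\<in>E. new_vertices e k)"

definition pow_edges :: "'a set set \<Rightarrow> nat \<Rightarrow> ('a + 'a set \<times> nat) set set" where
  "pow_edges E k = {Inl ` e \<union> new_vertices e k | e. e \<in> E}"

definition signed_subgraph ::
  "'a set \<Rightarrow> 'a set set \<Rightarrow> 'a set \<Rightarrow> 'a set set \<Rightarrow> ('a set \<Rightarrow> real) \<Rightarrow> bool" where
  "signed_subgraph V E V' E' sg \<longleftrightarrow> V' \<subseteq> V \<and> E' \<subseteq> E \<and> (\<forall>e\<in>E'. e \<subseteq> V')
      \<and> (\<forall>e\<in>E'. sg e = 1 \<or> sg e = -1)"

definition signed_induced_subgraph ::
  "'a set \<Rightarrow> 'a set set \<Rightarrow> 'a set \<Rightarrow> 'a set set \<Rightarrow> ('a set \<Rightarrow> real) \<Rightarrow> bool" where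
  "signed_induced_subgraph V E V' E' sg \<longleftrightarrow> signed_subgraph V E V' E' sg \<and> E' = {e\<in>E. e \<subseteq> V'}"

definition signed_adj :: "'a set set \<Rightarrow> ('a set \<Rightarrow> real) \<Rightarrow> 'a \<Rightarrow> 'a \<Rightarrow> real" where
  "signed_adj E' sg i j = (if {i, j} \<in> E' then sg {i, j} else 0)"

definition signed_eigenvalue :: "'a set \<Rightarrow> 'a set set \<Rightarrow> ('a set \<Rightarrow> real) \<Rightarrow> complex \<Rightarrow> bool" where
  "signed_eigenvalue V' E' sg beta \<longleftrightarrow>
     (\<exists>v :: 'a \<Rightarrow> complex. (\<exists>i\<in>V'. v i \<noteq> 0) \<and>
        (\<forall>i\<in>V'. (\<Sum>j\<in>V'. complex_of_real (signed_adj E' sg i j) * v j) = beta * v i))"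

end

theory Submission
  imports Defs "HOL-Combinatorics.Multiset_Permutations"
    "HOL-Computational_Algebra.Fundamental_Theorem_Algebra"
begin

text \<open>
  Let x be an eigenvector of G^(k) for an eigenvalue \<lambda> \<noteq> 0, and let P_e be the product of x
  over the hyperedge of e. Multiplied out, the eigen-equations say \<lambda> x_w^k = P_e at every new
  vertex w of e and \<lambda> x_u^k = \<Sum>_{e \<ni> u} P_e at every vertex u of G. The product over the k - 2
  new vertices of e gives \<lambda>^(k-2) P_e^2 = (\<Prod>_{u \<in> e} x_u)^k, so for y_u^2 = x_u^k and
  \<beta>^2 = \<lambda>^k we have P_e \<beta> / \<lambda> = \<plusminus>\<Prod>_{u \<in> e} y_u; with these signs y is an eigenvector for \<beta>
  of the signed graph formed by the edges with P_e \<noteq> 0 on the vertices with x_u \<noteq> 0.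
  Conversely a signed eigenvector lifts back by extracting k-th roots, all new vertices of an
  edge outside the signed subgraph being set to 0. Their equations then need a second zero in
  the hyperedge: for k \<ge> 4 another new vertex provides it, while for k = 3 it must be an
  endpoint of the edge, which is why the subgraph has to be induced in that case.
\<close>

section \<open>Eigenvalues of uniform hypergraphs\<close>

lemma index_lists_through_edges:
  assumes uniform: "\<forall>f\<in>F. f \<subseteq> W \<and> card f = k" and "k \<ge> 1"
  shows "{ys. length ys = k - 1 \<and> set ys \<subseteq> W \<and> set (i # ys) \<in> F}
       = (\<Union>f\<in>{f\<in>F. i \<in> f}. permutations_of_set (f - {i}))"
proof (intro equalityI subsetI)
  fix ys assume "ys \<in> {ys. length ys = k - 1 \<and> set ys \<subseteq> W \<and> set (i # ys) \<in> F}"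
  then have f: "set (i # ys) \<in> F" and "card (set (i # ys)) = length (i # ys)"
    using uniform \<open>k \<ge> 1\<close> by auto
  from this(2) have "distinct (i # ys)" by (rule card_distinct)
  with f show "ys \<in> (\<Union>f\<in>{f\<in>F. i \<in> f}. permutations_of_set (f - {i}))"
    by (auto simp: permutations_of_set_def)
next
  fix ys assume "ys \<in> (\<Union>f\<in>{f\<in>F. i \<in> f}. permutations_of_set (f - {i}))"
  then obtain f where f: "f \<in> F" "i \<in> f" and ys: "set ys = f - {i}" "distinct ys"
    by (auto simp: permutations_of_set_def)
  have "card f = k" using f uniform by blast
  then have "finite f" using \<open>k \<ge> 1\<close> by (simp add: card_ge_0_finite)
  then have "length ys = k - 1"
    using ys f \<open>card f = k\<close> by (metis distinct_card card_Diff_singleton)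
  moreover have "set (i # ys) = f" using ys f by auto
  ultimately show "ys \<in> {ys. length ys = k - 1 \<and> set ys \<subseteq> W \<and> set (i # ys) \<in> F}"
    using f uniform ys by auto
qed

lemma sum_adj_tensor_eq_sum_edges:
  fixes x :: "'v \<Rightarrow> complex"
  assumes "finite W" and uniform: "\<forall>f\<in>F. f \<subseteq> W \<and> card f = k" and "k \<ge> 1"
  shows "(\<Sum>ys\<in>{ys. length ys = k - 1 \<and> set ys \<subseteq> W}. adj_tensor k F (i # ys) * prod_list (map x ys))
       = (\<Sum>f\<in>{f\<in>F. i \<in> f}. prod x (f - {i}))"
proof -
  let ?c = "1 / of_nat (fact (k - 1)) :: complex"
  let ?L = "{ys. length ys = k - 1 \<and> set ys \<subseteq> W}"
  let ?edges = "{f\<in>F. i \<in> f}"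
  have "finite ?L"
    using finite_lists_length_eq[OF \<open>finite W\<close>, of "k - 1"] by (simp add: conj_commute)
  have "(\<Sum>ys\<in>?L. adj_tensor k F (i # ys) * prod_list (map x ys))
      = (\<Sum>ys\<in>?L. if set (i # ys) \<in> F then ?c * prod_list (map x ys) else 0)"
    by (intro sum.cong) (auto simp: adj_tensor_def)
  also have "\<dots> = (\<Sum>ys\<in>{ys\<in>?L. set (i # ys) \<in> F}. ?c * prod_list (map x ys))"
    by (rule sum.inter_filter[OF \<open>finite ?L\<close>, symmetric])
  also have "{ys\<in>?L. set (i # ys) \<in> F} = (\<Union>f\<in>?edges. permutations_of_set (f - {i}))"
    using index_lists_through_edges[OF uniform \<open>k \<ge> 1\<close>, of i] by (simp add: conj_assoc)
  also have "(\<Sum>ys\<in>\<dots>. ?c * prod_list (map x ys))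
      = (\<Sum>f\<in>?edges. \<Sum>ys\<in>permutations_of_set (f - {i}). ?c * prod_list (map x ys))"
  proof (rule sum.UNION_disjoint)
    show "finite ?edges"
      using finite_subset[of F "Pow W"] uniform \<open>finite W\<close> by (simp add: subset_iff)
    show "\<forall>f\<in>?edges. \<forall>g\<in>?edges. f \<noteq> g \<longrightarrow>
        permutations_of_set (f - {i}) \<inter> permutations_of_set (g - {i}) = {}"
    proof (intro ballI impI)
      fix f g assume "f \<in> ?edges" "g \<in> ?edges" "f \<noteq> g"
      then have "f - {i} \<noteq> g - {i}" by (metis (no_types, lifting) insert_Diff mem_Collect_eq)
      then show "permutations_of_set (f - {i}) \<inter> permutations_of_set (g - {i}) = {}"
        by (auto simp: permutations_of_set_def)
    qed
  qed simp
  also have "\<dots> = (\<Sum>f\<in>?edges. prod x (f - {i}))"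
  proof (rule sum.cong[OF refl])
    fix f assume f: "f \<in> ?edges"
    then have "card f = k" "i \<in> f" using uniform by auto
    then have "finite f" "card (f - {i}) = k - 1"
      using \<open>k \<ge> 1\<close> by (simp_all add: card_ge_0_finite card_Diff_singleton)
    moreover have "prod_list (map x ys) = prod x (f - {i})" if "ys \<in> permutations_of_set (f - {i})" for ys
      using that prod.distinct_set_conv_list[of ys x] by (simp add: permutations_of_set_def)
    ultimately show "(\<Sum>ys\<in>permutations_of_set (f - {i}). ?c * prod_list (map x ys)) = prod x (f - {i})"
      by simp
  qed
  finally show ?thesis .
qed

lemma hyp_eigenvalue_iff_edge_sums:
  assumes "finite W" "\<forall>f\<in>F. f \<subseteq> W \<and> card f = k" "k \<ge> 1"
  shows "hyp_eigenvalue k W F lam \<longleftrightarrow>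
    (\<exists>x. (\<exists>i\<in>W. x i \<noteq> 0) \<and>
       (\<forall>i\<in>W. (\<Sum>f\<in>{f\<in>F. i \<in> f}. prod x (f - {i})) = lam * x i ^ (k - 1)))"
  unfolding hyp_eigenvalue_def sum_adj_tensor_eq_sum_edges[OF assms] ..

section \<open>Signed graphs\<close>

lemma mult_signed_adj_sum:
  fixes y :: "'a \<Rightarrow> complex"
  assumes "finite V'" and edges: "\<forall>e\<in>E'. e \<subseteq> V' \<and> card e = 2"
  shows "y u * (\<Sum>j\<in>V'. complex_of_real (signed_adj E' sg u j) * y j)
       = (\<Sum>e\<in>{e\<in>E'. u \<in> e}. complex_of_real (sg e) * prod y e)"
proof -
  let ?w = "\<lambda>e. complex_of_real (sg e) * prod y e"
  let ?N = "{j\<in>V'. {u, j} \<in> E'}"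
  have loopless: "j \<noteq> u" if "{u, j} \<in> E'" for j
    using edges that by fastforce
  have "y u * (\<Sum>j\<in>V'. complex_of_real (signed_adj E' sg u j) * y j)
      = (\<Sum>j\<in>V'. if {u, j} \<in> E' then ?w {u, j} else 0)"
    unfolding sum_distrib_left
    by (intro sum.cong) (auto simp: signed_adj_def dest: loopless)
  also have "\<dots> = (\<Sum>j\<in>?N. ?w {u, j})"
    by (rule sum.inter_filter[OF \<open>finite V'\<close>, symmetric])
  also have "\<dots> = (\<Sum>e\<in>(\<lambda>j. {u, j}) ` ?N. ?w e)"
    by (subst sum.reindex) (auto simp: inj_on_def doubleton_eq_iff)
  also have "(\<lambda>j. {u, j}) ` ?N = {e\<in>E'. u \<in> e}"
  proof (intro equalityI subsetI)
    fix e assume e: "e \<in> {e\<in>E'. u \<in> e}"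
    then obtain a b where "e = {a, b}" "a \<noteq> b"
      using edges by (auto simp: card_2_iff)
    then obtain j where "e = {u, j}" using e by auto
    then show "e \<in> (\<lambda>j. {u, j}) ` ?N" using e edges by auto
  qed auto
  finally show ?thesis .
qed

lemma signed_eigenvalueI_edge_sums:
  fixes y :: "'a \<Rightarrow> complex"
  assumes "finite V'" "\<forall>e\<in>E'. e \<subseteq> V' \<and> card e = 2" "V' \<noteq> {}" "\<forall>u\<in>V'. y u \<noteq> 0"
    and sums: "\<forall>u\<in>V'. (\<Sum>e\<in>{e\<in>E'. u \<in> e}. complex_of_real (sg e) * prod y e) = beta * y u ^ 2"
  shows "signed_eigenvalue V' E' sg beta"
  unfolding signed_eigenvalue_def
proof (intro exI[of _ y] conjI ballI)
  show "\<exists>i\<in>V'. y i \<noteq> 0" using assms(3,4) by blast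
  fix u assume "u \<in> V'"
  then have "y u * (\<Sum>j\<in>V'. complex_of_real (signed_adj E' sg u j) * y j) = y u * (beta * y u)"
    using sums mult_signed_adj_sum[OF assms(1,2)] by (simp add: power2_eq_square)
  then show "(\<Sum>j\<in>V'. complex_of_real (signed_adj E' sg u j) * y j) = beta * y u"
    using \<open>u \<in> V'\<close> assms(4) by simp
qed

lemma signed_eigenvalueE_edge_sums:
  assumes "finite V'" "\<forall>e\<in>E'. e \<subseteq> V' \<and> card e = 2" "signed_eigenvalue V' E' sg beta"
  obtains z :: "'a \<Rightarrow> complex" where "\<exists>u\<in>V'. z u \<noteq> 0" "\<forall>u. u \<notin> V' \<longrightarrow> z u = 0"
    "\<forall>u\<in>V'. (\<Sum>e\<in>{e\<in>E'. u \<in> e}. complex_of_real (sg e) * prod z e) = beta * z u ^ 2"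
proof -
  obtain y where y: "\<exists>u\<in>V'. y u \<noteq> 0"
    "\<forall>u\<in>V'. (\<Sum>j\<in>V'. complex_of_real (signed_adj E' sg u j) * y j) = beta * y u"
    using assms(3) unfolding signed_eigenvalue_def by blast
  define z where "z u = (if u \<in> V' then y u else 0)" for u
  have sums: "(\<Sum>e\<in>{e\<in>E'. u \<in> e}. complex_of_real (sg e) * prod z e) = beta * z u ^ 2"
    if "u \<in> V'" for u
  proof -
    have "(\<Sum>j\<in>V'. complex_of_real (signed_adj E' sg u j) * z j) = beta * z u"
      using y(2) that by (simp add: z_def)
    then have "z u * (\<Sum>j\<in>V'. complex_of_real (signed_adj E' sg u j) * z j) = z u * (beta * z u)"
      by simp
    then show ?thesis
      unfolding mult_signed_adj_sum[OF assms(1,2)] by (simp add: power2_eq_square mult_ac)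
  qed
  show thesis
  proof (rule that[of z])
    show "\<exists>u\<in>V'. z u \<noteq> 0" using y(1) by (auto simp: z_def)
    show "\<forall>u. u \<notin> V' \<longrightarrow> z u = 0" by (simp add: z_def)
  qed (use sums in blast)
qed

section \<open>Factorisations with prescribed powers\<close>

lemma power_relation_of_factors:
  fixes t :: "'b \<Rightarrow> 'a::field"
  assumes "finite N" "card N = n"
    and factors: "\<forall>j\<in>N. lam * t j ^ (n + 2) = Q * prod t N" and "Q * prod t N \<noteq> 0"
  shows "lam ^ n * (Q * prod t N) ^ 2 = Q ^ (n + 2)"
proof -
  let ?T = "prod t N"
  have "?T ^ n * (lam ^ n * ?T ^ 2) = lam ^ n * ?T ^ (n + 2)"
    by (simp add: power_add power2_eq_square ac_simps)
  also have "\<dots> = (\<Prod>j\<in>N. lam * t j ^ (n + 2))"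
    using assms(1,2) by (simp add: prod.distrib prod_power_distrib)
  also have "\<dots> = (Q * ?T) ^ n"
    using factors assms(2) by simp
  also have "\<dots> = ?T ^ n * Q ^ n"
    by (simp add: power_mult_distrib ac_simps)
  finally have "?T ^ n * (lam ^ n * ?T ^ 2) = ?T ^ n * Q ^ n" .
  moreover have "?T ^ n \<noteq> 0"
    using \<open>Q * ?T \<noteq> 0\<close> by simp
  ultimately have "lam ^ n * ?T ^ 2 = Q ^ n"
    by auto
  then have "lam ^ n * (Q * ?T) ^ 2 = Q ^ 2 * Q ^ n"
    by (metis mult.left_commute power_mult_distrib)
  then show ?thesis
    by (simp add: power_add power2_eq_square mult.commute)
qed

lemma factors_of_power_relation:
  fixes lam Q D :: complex
  assumes "lam \<noteq> 0" "D \<noteq> 0" "n \<ge> 1" and rel: "lam ^ n * D ^ 2 = Q ^ (n + 2)"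
  shows "\<exists>t. (\<forall>j. lam * t j ^ (n + 2) = D) \<and> Q * (\<Prod>j<n. t j) = D"
proof -
  obtain m where n: "n = Suc m" using \<open>n \<ge> 1\<close> by (cases n) auto
  obtain a where a: "a ^ (n + 2) = D / lam"
    using nth_root_exists[of "n + 2" "D / lam"] by auto
  have "a \<noteq> 0" "Q \<noteq> 0"
    using a rel assms(1,2) by auto
  define b where "b = D / (Q * a ^ m)"
  define t :: "nat \<Rightarrow> complex" where "t j = (if j = 0 then b else a)" for j
  have "b ^ (n + 2) = D ^ (n + 2) / (Q ^ (n + 2) * (a ^ (n + 2)) ^ m)"
    by (simp add: b_def power_divide power_mult_distrib flip: power_mult) (simp add: mult.commute)
  also have "\<dots> = D / lam"
    unfolding a rel[symmetric] using assms(1,2) n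
    by (simp add: power_divide field_simps power2_eq_square)
  finally have "lam * t j ^ (n + 2) = D" for j
    using a assms(1) by (simp add: t_def field_simps)
  moreover have "Q * (\<Prod>j<n. t j) = D"
    using \<open>a \<noteq> 0\<close> \<open>Q \<noteq> 0\<close> unfolding n prod.lessThan_Suc_shift by (simp add: t_def b_def)
  ultimately show ?thesis by blast
qed

lemma mult_scaled_power_pred: "0 < k \<Longrightarrow> a * (c * a ^ (k - 1)) = c * (a::'a::comm_semiring_1) ^ k"
  by (cases k) (simp_all add: mult_ac)

section \<open>The power hypergraph\<close>

definition pow_edge :: "'a set \<Rightarrow> nat \<Rightarrow> ('a + 'a set \<times> nat) set" where
  "pow_edge e k = Inl ` e \<union> new_vertices e k"

lemma new_vertices_eq_image: "new_vertices e k = (\<lambda>j. Inr (e, j)) ` {..<k - 2}"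
  by (auto simp: new_vertices_def)

lemma finite_new_vertices [simp]: "finite (new_vertices e k)"
  by (simp add: new_vertices_eq_image)

lemma card_new_vertices: "card (new_vertices e k) = k - 2"
  unfolding new_vertices_eq_image by (subst card_image) (auto simp: inj_on_def)

lemma prod_new_vertices: "prod x (new_vertices e k) = (\<Prod>j<k - 2. x (Inr (e, j)))"
  unfolding new_vertices_eq_image by (subst prod.reindex) (auto simp: inj_on_def)

lemma pow_edges_eq_image: "pow_edges E k = (\<lambda>e. pow_edge e k) ` E"
  by (auto simp: pow_edges_def pow_edge_def)

lemma Inl_in_pow_edge_iff [simp]: "Inl u \<in> pow_edge e k \<longleftrightarrow> u \<in> e"
  by (auto simp: pow_edge_def new_vertices_def)

lemma Inr_in_pow_edge_iff [simp]: "Inr (e', j) \<in> pow_edge e k \<longleftrightarrow> e' = e \<and> j < k - 2"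
  by (auto simp: pow_edge_def new_vertices_def)

lemma inj_on_pow_edge: "inj_on (\<lambda>e. pow_edge e k) E"
  by (rule inj_onI) (metis Inl_in_pow_edge_iff subsetI subset_antisym)

lemma finite_pow_edge [simp]: "finite (pow_edge e k) \<longleftrightarrow> finite e"
  by (auto simp: pow_edge_def new_vertices_eq_image dest: finite_imageD)

lemma prod_pow_edge:
  "finite e \<Longrightarrow> prod x (pow_edge e k) = (\<Prod>u\<in>e. x (Inl u)) * prod x (new_vertices e k)"
  unfolding pow_edge_def
  by (subst prod.union_disjoint) (auto simp: new_vertices_def prod.reindex)

lemma card_pow_edge:
  assumes "card e = 2" "k \<ge> 2"
  shows "card (pow_edge e k) = k"
proof -
  have "finite e" using \<open>card e = 2\<close> by (simp add: card_ge_0_finite)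
  have "card (pow_edge e k) = card (Inl ` e :: ('a + 'a set \<times> nat) set) + card (new_vertices e k)"
    unfolding pow_edge_def by (rule card_Un_disjoint) (use \<open>finite e\<close> in \<open>auto simp: new_vertices_def\<close>)
  then show ?thesis
    using assms by (simp add: card_image card_new_vertices)
qed

lemma mem_pow_vertices_iff:
  "i \<in> pow_vertices V E k \<longleftrightarrow> (\<exists>u\<in>V. i = Inl u) \<or> (\<exists>e\<in>E. \<exists>j<k - 2. i = Inr (e, j))"
  by (auto simp: pow_vertices_def new_vertices_def)

lemma ball_pow_vertices_iff:
  "(\<forall>i\<in>pow_vertices V E k. P i) \<longleftrightarrow> (\<forall>u\<in>V. P (Inl u)) \<and> (\<forall>e\<in>E. \<forall>j<k - 2. P (Inr (e, j)))"
  by (auto simp: mem_pow_vertices_iff)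

lemma pow_edges_containing_Inr:
  "e \<in> E \<Longrightarrow> j < k - 2 \<Longrightarrow> {f\<in>pow_edges E k. Inr (e, j) \<in> f} = {pow_edge e k}"
  by (auto simp: pow_edges_eq_image)

lemma pow_edges_containing_Inl:
  "{f\<in>pow_edges E k. Inl u \<in> f} = (\<lambda>e. pow_edge e k) ` {e\<in>E. u \<in> e}"
  by (auto simp: pow_edges_eq_image)

definition power_eigenvector ::
  "'a set \<Rightarrow> 'a set set \<Rightarrow> nat \<Rightarrow> complex \<Rightarrow> ('a + 'a set \<times> nat \<Rightarrow> complex) \<Rightarrow> bool" where
  "power_eigenvector V E k lam x \<longleftrightarrow> (\<exists>i\<in>pow_vertices V E k. x i \<noteq> 0)
     \<and> (\<forall>e\<in>E. \<forall>j<k - 2. prod x (pow_edge e k - {Inr (e, j)}) = lam * x (Inr (e, j)) ^ (k - 1))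
     \<and> (\<forall>u\<in>V. (\<Sum>e\<in>{e\<in>E. u \<in> e}. prod x (pow_edge e k - {Inl u})) = lam * x (Inl u) ^ (k - 1))"

definition pow_signed_subgraph ::
  "nat \<Rightarrow> 'a set \<Rightarrow> 'a set set \<Rightarrow> 'a set \<Rightarrow> 'a set set \<Rightarrow> ('a set \<Rightarrow> real) \<Rightarrow> bool" where
  "pow_signed_subgraph k V E V' E' sg \<longleftrightarrow>
     (if k = 3 then signed_induced_subgraph V E V' E' sg else signed_subgraph V E V' E' sg)"

lemma pow_signed_subgraph_iff:
  "pow_signed_subgraph k V E V' E' sg \<longleftrightarrow> signed_subgraph V E V' E' sg \<and> (k = 3 \<longrightarrow> E' = {e\<in>E. e \<subseteq> V'})"
  by (simp add: pow_signed_subgraph_def signed_induced_subgraph_def)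

context
  fixes V :: "'a set" and E :: "'a set set" and k :: nat
  assumes graph: "graph V E" and k: "k \<ge> 3"
begin

lemma finite_graph_edges: "finite E" and finite_edge: "e \<in> E \<Longrightarrow> finite e"
  and card_edge: "e \<in> E \<Longrightarrow> card e = 2"
  using graph finite_subset[of E "Pow V"] finite_subset[of e V] by (auto simp: graph_def)

lemma pow_hypergraph_uniform:
  "finite (pow_vertices V E k)" "\<forall>f\<in>pow_edges E k. f \<subseteq> pow_vertices V E k \<and> card f = k"
  using graph k finite_graph_edges card_edge
  by (auto simp: graph_def pow_vertices_def pow_edges_eq_image card_pow_edge, auto simp: pow_edge_def)

lemma hyp_eigenvalue_pow_iff:
  "hyp_eigenvalue k (pow_vertices V E k) (pow_edges E k) lam \<longleftrightarrow> (\<exists>x. power_eigenvector V E k lam x)"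
proof -
  have new: "(\<Sum>f\<in>{f\<in>pow_edges E k. Inr (e, j) \<in> f}. prod x (f - {Inr (e, j)}))
      = prod x (pow_edge e k - {Inr (e, j)})" if "e \<in> E" "j < k - 2" for x e j
    using that by (simp add: pow_edges_containing_Inr)
  have old: "(\<Sum>f\<in>{f\<in>pow_edges E k. Inl u \<in> f}. prod x (f - {Inl u}))
      = (\<Sum>e\<in>{e\<in>E. u \<in> e}. prod x (pow_edge e k - {Inl u}))" for x u
    unfolding pow_edges_containing_Inl
    by (subst sum.reindex) (auto intro: inj_on_subset[OF inj_on_pow_edge])
  have "(\<forall>i\<in>pow_vertices V E k. (\<Sum>f\<in>{f\<in>pow_edges E k. i \<in> f}. prod x (f - {i})) = lam * x i ^ (k - 1))
    \<longleftrightarrow> (\<forall>e\<in>E. \<forall>j<k - 2. prod x (pow_edge e k - {Inr (e, j)}) = lam * x (Inr (e, j)) ^ (k - 1))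
      \<and> (\<forall>u\<in>V. (\<Sum>e\<in>{e\<in>E. u \<in> e}. prod x (pow_edge e k - {Inl u})) = lam * x (Inl u) ^ (k - 1))"
    for x
    unfolding ball_pow_vertices_iff old by (auto simp: new)
  moreover have "k \<ge> 1" using k by simp
  ultimately show ?thesis
    unfolding hyp_eigenvalue_iff_edge_sums[OF pow_hypergraph_uniform \<open>k \<ge> 1\<close>] power_eigenvector_def
    by simp
qed

context
  fixes lam :: complex and x :: "'a + 'a set \<times> nat \<Rightarrow> complex"
  assumes eigvec: "power_eigenvector V E k lam x"
begin

lemma power_eigenvector_new_vertex:
  assumes "e \<in> E" "w \<in> new_vertices e k"
  shows "lam * x w ^ k = prod x (pow_edge e k)"
proof -
  obtain j where j: "j < k - 2" "w = Inr (e, j)"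
    using assms(2) by (auto simp: new_vertices_def)
  then have "prod x (pow_edge e k) = x w * prod x (pow_edge e k - {w})"
    using finite_edge[OF assms(1)] by (simp add: prod.remove)
  also have "\<dots> = x w * (lam * x w ^ (k - 1))"
    using eigvec assms(1) j by (simp add: power_eigenvector_def)
  also have "\<dots> = lam * x w ^ k"
    using k by (intro mult_scaled_power_pred) simp
  finally show ?thesis ..
qed

lemma power_eigenvector_vertex_sum:
  assumes "u \<in> V"
  shows "lam * x (Inl u) ^ k = (\<Sum>e\<in>{e\<in>E. u \<in> e}. prod x (pow_edge e k))"
proof -
  have "lam * x (Inl u) ^ k = x (Inl u) * (lam * x (Inl u) ^ (k - 1))"
    using k by (intro mult_scaled_power_pred[symmetric]) simp
  also have "\<dots> = x (Inl u) * (\<Sum>e\<in>{e\<in>E. u \<in> e}. prod x (pow_edge e k - {Inl u}))"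
    using eigvec assms by (simp add: power_eigenvector_def)
  also have "\<dots> = (\<Sum>e\<in>{e\<in>E. u \<in> e}. prod x (pow_edge e k))"
    unfolding sum_distrib_left
    by (intro sum.cong refl prod.remove[symmetric]) (auto simp: finite_edge)
  finally show ?thesis .
qed

lemma power_eigenvector_edge_relation:
  assumes "e \<in> E" "prod x (pow_edge e k) \<noteq> 0"
  shows "lam ^ (k - 2) * prod x (pow_edge e k) ^ 2 = (\<Prod>u\<in>e. x (Inl u)) ^ k"
proof -
  let ?Q = "\<Prod>u\<in>e. x (Inl u)"
  have P: "prod x (pow_edge e k) = ?Q * prod x (new_vertices e k)"
    by (rule prod_pow_edge[OF finite_edge[OF assms(1)]])
  have k2: "k - 2 + 2 = k" using k by simp
  have "\<forall>w\<in>new_vertices e k. lam * x w ^ (k - 2 + 2) = ?Q * prod x (new_vertices e k)"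
    using power_eigenvector_new_vertex[OF assms(1)] P k2 by simp
  moreover have "?Q * prod x (new_vertices e k) \<noteq> 0"
    using P assms(2) by simp
  ultimately have "lam ^ (k - 2) * (?Q * prod x (new_vertices e k)) ^ 2 = ?Q ^ (k - 2 + 2)"
    by (intro power_relation_of_factors[OF finite_new_vertices card_new_vertices]) (simp_all add: k2)
  then show ?thesis
    unfolding P k2 .
qed

lemma power_eigenvector_pow_edge_nonzero:
  assumes "k = 3" "e \<in> E" "\<forall>u\<in>e. x (Inl u) \<noteq> 0"
  shows "prod x (pow_edge e k) \<noteq> 0"
proof -
  let ?w = "Inr (e, 0)"
  have "new_vertices e k = {?w}" "pow_edge e k - {?w} = Inl ` e"
    using assms(1) by (auto simp: pow_edge_def new_vertices_def)
  moreover have "prod x (pow_edge e k - {?w}) = lam * x ?w ^ (k - 1)"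
    using eigvec assms(1,2) by (simp add: power_eigenvector_def)
  ultimately have "(\<Prod>u\<in>e. x (Inl u)) = lam * x ?w ^ 2"
    using assms(1) by (simp add: prod.reindex)
  moreover have "(\<Prod>u\<in>e. x (Inl u)) \<noteq> 0"
    using assms(3) finite_edge[OF assms(2)] by simp
  ultimately show ?thesis
    using prod_pow_edge[OF finite_edge[OF assms(2)], of x k] \<open>new_vertices e k = {?w}\<close> by auto
qed

lemma power_eigenvector_Inl_nonzero:
  assumes "lam \<noteq> 0"
  shows "\<exists>u\<in>V. x (Inl u) \<noteq> 0"
proof -
  obtain i where "i \<in> pow_vertices V E k" "x i \<noteq> 0"
    using eigvec by (auto simp: power_eigenvector_def)
  then consider u where "u \<in> V" "x (Inl u) \<noteq> 0" | e j where "e \<in> E" "j < k - 2" "x (Inr (e, j)) \<noteq> 0"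
    by (auto simp: mem_pow_vertices_iff)
  then show ?thesis
  proof cases
    case 2
    then have "lam * x (Inr (e, j)) ^ k \<noteq> 0"
      using assms by simp
    then have "prod x (pow_edge e k) \<noteq> 0"
      using power_eigenvector_new_vertex[of e "Inr (e, j)"] 2 by (simp add: new_vertices_def)
    then have "\<forall>u\<in>e. x (Inl u) \<noteq> 0"
      using prod_pow_edge[OF finite_edge[OF \<open>e \<in> E\<close>]] finite_edge[OF \<open>e \<in> E\<close>] by auto
    moreover obtain u where "u \<in> e"
      using card_edge[OF \<open>e \<in> E\<close>] by fastforce
    ultimately show ?thesis
      using graph \<open>e \<in> E\<close> by (auto simp: graph_def)
  qed blast
qed

lemma signed_eigenvalue_of_power_eigenvector:
  assumes "lam \<noteq> 0"
  shows "\<exists>V' E' sg beta. pow_signed_subgraph k V E V' E' sg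
           \<and> signed_eigenvalue V' E' sg beta \<and> beta ^ 2 = lam ^ k"
proof -
  define P where "P e = prod x (pow_edge e k)" for e
  define y where "y u = csqrt (x (Inl u) ^ k)" for u
  define beta where "beta = csqrt (lam ^ k)"
  define V' where "V' = {u\<in>V. x (Inl u) \<noteq> 0}"
  define E' where "E' = {e\<in>E. P e \<noteq> 0}"
  define sg :: "'a set \<Rightarrow> real" where "sg e = (if P e * beta / lam = prod y e then 1 else -1)" for e
  have y_sq: "y u ^ 2 = x (Inl u) ^ k" for u
    by (simp add: y_def)
  have beta_sq: "beta ^ 2 = lam ^ k"
    by (simp add: beta_def)
  have edges_in_V': "e \<subseteq> V'" if "e \<in> E'" for e
    using that prod_pow_edge[OF finite_edge] finite_edge graph
    by (auto simp: E'_def V'_def P_def graph_def)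
  have signs: "complex_of_real (sg e) * prod y e = P e * beta / lam" if "e \<in> E'" for e
  proof -
    have "(P e * beta / lam) ^ 2 = lam ^ (k - 2) * P e ^ 2"
      using assms k by (simp add: power_mult_distrib power_divide beta_sq power_diff)
    also have "\<dots> = (prod y e) ^ 2"
      using power_eigenvector_edge_relation that
      by (simp add: E'_def P_def prod_power_distrib y_sq)
    finally show ?thesis
      by (auto simp: sg_def power2_eq_iff)
  qed
  have "(\<Sum>e\<in>{e\<in>E'. u \<in> e}. complex_of_real (sg e) * prod y e) = beta * y u ^ 2" if "u \<in> V'" for u
  proof -
    have "(\<Sum>e\<in>{e\<in>E'. u \<in> e}. complex_of_real (sg e) * prod y e) = (\<Sum>e\<in>{e\<in>E. u \<in> e}. P e * beta / lam)"
      using signs finite_graph_edges by (intro sum.mono_neutral_cong_left) (auto simp: E'_def)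
    also have "\<dots> = beta / lam * (lam * x (Inl u) ^ k)"
      using power_eigenvector_vertex_sum that by (simp add: V'_def P_def sum_distrib_left mult_ac)
    finally show ?thesis
      using assms by (simp add: y_sq)
  qed
  moreover have "finite V'" "V' \<noteq> {}" "\<forall>u\<in>V'. y u \<noteq> 0"
    using graph power_eigenvector_Inl_nonzero[OF assms] k by (auto simp: graph_def V'_def y_def)
  moreover have "\<forall>e\<in>E'. e \<subseteq> V' \<and> card e = 2"
    using edges_in_V' card_edge by (simp add: E'_def)
  ultimately have "signed_eigenvalue V' E' sg beta"
    by (intro signed_eigenvalueI_edge_sums) auto
  moreover have "signed_subgraph V E V' E' sg"
    using edges_in_V' by (auto simp: signed_subgraph_def V'_def E'_def sg_def)
  moreover have "k = 3 \<longrightarrow> E' = {e\<in>E. e \<subseteq> V'}"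
    using edges_in_V' power_eigenvector_pow_edge_nonzero by (auto simp: E'_def V'_def P_def)
  ultimately show ?thesis
    using beta_sq unfolding pow_signed_subgraph_iff by blast
qed

end

lemma power_eigenvectorI:
  assumes "lam \<noteq> 0"
    and nonzero: "\<exists>u\<in>V. x (Inl u) \<noteq> 0"
    and new: "\<forall>e\<in>E. \<forall>w\<in>new_vertices e k. lam * x w ^ k = prod x (pow_edge e k)"
    and degenerate: "\<forall>e\<in>E. prod x (pow_edge e k) = 0 \<longrightarrow>
                       (\<forall>w\<in>new_vertices e k. \<exists>v\<in>pow_edge e k - {w}. x v = 0)"
    and old: "\<forall>u\<in>V. x (Inl u) \<noteq> 0 \<longrightarrow> lam * x (Inl u) ^ k = (\<Sum>e\<in>{e\<in>E. u \<in> e}. prod x (pow_edge e k))"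
  shows "power_eigenvector V E k lam x"
  unfolding power_eigenvector_def
proof (intro conjI ballI allI impI)
  show "\<exists>i\<in>pow_vertices V E k. x i \<noteq> 0"
    using nonzero by (auto simp: pow_vertices_def)
next
  fix e j assume e: "e \<in> E" and j: "j < k - 2"
  let ?w = "Inr (e, j)"
  have w: "?w \<in> new_vertices e k" "?w \<in> pow_edge e k"
    using j by (auto simp: new_vertices_def)
  show "prod x (pow_edge e k - {?w}) = lam * x ?w ^ (k - 1)"
  proof (cases "x ?w = 0")
    case True
    then have "prod x (pow_edge e k - {?w}) = 0"
      using new degenerate e w \<open>lam \<noteq> 0\<close> k finite_edge[OF e] by auto
    then show ?thesis using True k by simp
  next
    case False
    have "x ?w * prod x (pow_edge e k - {?w}) = prod x (pow_edge e k)"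
      using w(2) finite_edge[OF e] by (intro prod.remove[symmetric]) simp_all
    also have "\<dots> = lam * x ?w ^ k"
      using new e w by simp
    also have "\<dots> = x ?w * (lam * x ?w ^ (k - 1))"
      using k by (intro mult_scaled_power_pred[symmetric]) simp
    finally show ?thesis using False by simp
  qed
next
  fix u assume u: "u \<in> V"
  show "(\<Sum>e\<in>{e\<in>E. u \<in> e}. prod x (pow_edge e k - {Inl u})) = lam * x (Inl u) ^ (k - 1)"
  proof (cases "x (Inl u) = 0")
    case True
    have "prod x (pow_edge e k - {Inl u}) = 0" if "e \<in> E" "u \<in> e" for e
    proof -
      have "Inr (e, 0) \<in> new_vertices e k" "Inr (e, 0) \<in> pow_edge e k - {Inl u}"
        using k by (auto simp: new_vertices_def)
      moreover have "prod x (pow_edge e k) = 0"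
        using True that finite_edge by (auto simp: prod_pow_edge)
      ultimately have "x (Inr (e, 0)) = 0"
        using new \<open>lam \<noteq> 0\<close> that(1) k by auto
      then show ?thesis
        using \<open>Inr (e, 0) \<in> pow_edge e k - {Inl u}\<close> finite_edge[OF that(1)]
        by (auto simp: prod_zero_iff)
    qed
    then show ?thesis using True k by simp
  next
    case False
    have "x (Inl u) * (\<Sum>e\<in>{e\<in>E. u \<in> e}. prod x (pow_edge e k - {Inl u}))
        = (\<Sum>e\<in>{e\<in>E. u \<in> e}. prod x (pow_edge e k))"
      unfolding sum_distrib_left
      by (intro sum.cong refl prod.remove[symmetric]) (auto simp: finite_edge)
    also have "\<dots> = lam * x (Inl u) ^ k"
      using old u False by simp
    also have "\<dots> = x (Inl u) * (lam * x (Inl u) ^ (k - 1))"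
      using k by (intro mult_scaled_power_pred[symmetric]) simp
    finally show ?thesis using False by simp
  qed
qed

lemma power_eigenvector_of_edge_values:
  fixes X :: "'a \<Rightarrow> complex" and D :: "'a set \<Rightarrow> complex"
  assumes "lam \<noteq> 0" and "\<exists>u\<in>V. X u \<noteq> 0"
    and relation: "\<forall>e\<in>E. D e \<noteq> 0 \<longrightarrow> lam ^ (k - 2) * D e ^ 2 = (\<Prod>u\<in>e. X u) ^ k"
    and degenerate: "k = 3 \<Longrightarrow> \<forall>e\<in>E. D e = 0 \<longrightarrow> (\<exists>u\<in>e. X u = 0)"
    and sums: "\<forall>u\<in>V. X u \<noteq> 0 \<longrightarrow> lam * X u ^ k = (\<Sum>e\<in>{e\<in>E. u \<in> e}. D e)"
  shows "\<exists>x. power_eigenvector V E k lam x"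
proof -
  have "k - 2 \<ge> 1" "k - 2 + 2 = k" using k by simp_all
  then have "\<forall>e\<in>E. \<exists>t. D e \<noteq> 0 \<longrightarrow> (\<forall>j. lam * t j ^ k = D e) \<and> (\<Prod>u\<in>e. X u) * (\<Prod>j<k - 2. t j) = D e"
    using factors_of_power_relation[OF \<open>lam \<noteq> 0\<close>] relation by metis
  then obtain t where t: "\<forall>e\<in>E. D e \<noteq> 0 \<longrightarrow>
      (\<forall>j. lam * t e j ^ k = D e) \<and> (\<Prod>u\<in>e. X u) * (\<Prod>j<k - 2. t e j) = D e"
    by (metis bchoice)
  define x where "x i = (case i of Inl u \<Rightarrow> X u | Inr (e, j) \<Rightarrow> if D e = 0 then 0 else t e j)" for i
  have x_simps [simp]: "x (Inl u) = X u" "x (Inr (e, j)) = (if D e = 0 then 0 else t e j)" for u e j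
    by (simp_all add: x_def)
  have pow_edge_prod: "prod x (pow_edge e k) = D e" if "e \<in> E" for e
  proof (cases "D e = 0")
    case True
    then have "(\<Prod>j<k - 2. x (Inr (e, j))) = 0"
      using \<open>k - 2 \<ge> 1\<close> by simp
    then show ?thesis
      using True prod_pow_edge[OF finite_edge[OF that], of x k] by (simp add: prod_new_vertices)
  next
    case False
    then show ?thesis
      using t that prod_pow_edge[OF finite_edge[OF that], of x k] by (simp add: prod_new_vertices)
  qed
  show ?thesis
  proof (intro exI power_eigenvectorI \<open>lam \<noteq> 0\<close>)
    show "\<exists>u\<in>V. x (Inl u) \<noteq> 0"
      using assms(2) by simp
    show "\<forall>e\<in>E. \<forall>w\<in>new_vertices e k. lam * x w ^ k = prod x (pow_edge e k)"
      using t pow_edge_prod k by (auto simp: new_vertices_def x_def)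
    show "\<forall>e\<in>E. prod x (pow_edge e k) = 0 \<longrightarrow> (\<forall>w\<in>new_vertices e k. \<exists>v\<in>pow_edge e k - {w}. x v = 0)"
    proof (intro ballI impI)
      fix e w assume e: "e \<in> E" and "prod x (pow_edge e k) = 0" and "w \<in> new_vertices e k"
      then have "D e = 0" using pow_edge_prod by simp
      obtain j where j: "w = Inr (e, j)" "j < k - 2"
        using \<open>w \<in> new_vertices e k\<close> by (auto simp: new_vertices_def)
      show "\<exists>v\<in>pow_edge e k - {w}. x v = 0"
      proof (cases "k = 3")
        case True
        then obtain u where "u \<in> e" "X u = 0"
          using degenerate e \<open>D e = 0\<close> by blast
        then show ?thesis
          using j by (intro bexI[of _ "Inl u"]) auto
      next
        case False
        let ?v = "Inr (e, if j = 0 then 1 else 0)"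
        have "?v \<in> pow_edge e k - {w}"
          using False k j by auto
        then show ?thesis
          using \<open>D e = 0\<close> by (intro bexI[of _ ?v]) auto
      qed
    qed
    have "(\<Sum>e\<in>{e\<in>E. u \<in> e}. prod x (pow_edge e k)) = (\<Sum>e\<in>{e\<in>E. u \<in> e}. D e)" for u
      using pow_edge_prod by (intro sum.cong) auto
    then show "\<forall>u\<in>V. x (Inl u) \<noteq> 0 \<longrightarrow> lam * x (Inl u) ^ k = (\<Sum>e\<in>{e\<in>E. u \<in> e}. prod x (pow_edge e k))"
      using sums by simp
  qed
qed

lemma power_eigenvector_of_signed_eigenvalue:
  assumes "lam \<noteq> 0" "pow_signed_subgraph k V E V' E' sg"
    and "signed_eigenvalue V' E' sg beta" and beta: "beta ^ 2 = lam ^ k"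
  shows "\<exists>x. power_eigenvector V E k lam x"
proof -
  have sub: "signed_subgraph V E V' E' sg" and induced: "k = 3 \<longrightarrow> E' = {e\<in>E. e \<subseteq> V'}"
    using assms(2) by (simp_all add: pow_signed_subgraph_iff)
  have "finite V'" "\<forall>e\<in>E'. e \<subseteq> V' \<and> card e = 2"
    using sub graph card_edge by (auto simp: signed_subgraph_def graph_def intro: finite_subset)
  then obtain z where z_nonzero: "\<exists>u\<in>V'. z u \<noteq> 0" and z_outside: "\<forall>u. u \<notin> V' \<longrightarrow> z u = 0"
    and z_sums: "\<forall>u\<in>V'. (\<Sum>e\<in>{e\<in>E'. u \<in> e}. complex_of_real (sg e) * prod z e) = beta * z u ^ 2"
    by (rule signed_eigenvalueE_edge_sums[OF _ _ assms(3)])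
  have "\<forall>u. \<exists>w. w ^ k = z u ^ 2"
    using k by (intro allI nth_root_exists) simp
  then obtain X where X: "\<forall>u. X u ^ k = z u ^ 2"
    by (metis choice)
  have X_eq_0: "X u = 0 \<longleftrightarrow> z u = 0" for u
    using X[rule_format, of u] k by (metis power_eq_0_iff not_gr0 not_numeral_le_zero zero_less_numeral)
  have "beta \<noteq> 0" "k - 2 + 2 = k"
    using beta \<open>lam \<noteq> 0\<close> k by auto
  \<comment> \<open>the hyperedge products that the lifted eigenvector is to have\<close>
  define D where "D e = (if e \<in> E' then lam / beta * complex_of_real (sg e) * prod z e else 0)" for e
  show ?thesis
  proof (rule power_eigenvector_of_edge_values[OF \<open>lam \<noteq> 0\<close>])
    show "\<exists>u\<in>V. X u \<noteq> 0"
      using z_nonzero sub X_eq_0 by (auto simp: signed_subgraph_def)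
    show "\<forall>e\<in>E. D e \<noteq> 0 \<longrightarrow> lam ^ (k - 2) * D e ^ 2 = (\<Prod>u\<in>e. X u) ^ k"
    proof (intro ballI impI)
      fix e assume "e \<in> E" "D e \<noteq> 0"
      then have "e \<in> E'" by (auto simp: D_def split: if_splits)
      then have "complex_of_real (sg e) ^ 2 = 1"
        using sub by (auto simp: signed_subgraph_def)
      then have "lam ^ (k - 2) * D e ^ 2 = lam ^ (k - 2) * lam ^ 2 / beta ^ 2 * (prod z e) ^ 2"
        using \<open>e \<in> E'\<close> by (simp add: D_def power_mult_distrib power_divide)
      also have "\<dots> = (prod z e) ^ 2"
        unfolding power_add[symmetric] \<open>k - 2 + 2 = k\<close> beta[symmetric] using \<open>beta \<noteq> 0\<close> by simp
      also have "\<dots> = (\<Prod>u\<in>e. X u) ^ k"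
        by (simp add: prod_power_distrib X)
      finally show "lam ^ (k - 2) * D e ^ 2 = (\<Prod>u\<in>e. X u) ^ k" .
    qed
    show "\<forall>e\<in>E. D e = 0 \<longrightarrow> (\<exists>u\<in>e. X u = 0)" if "k = 3"
    proof (intro ballI impI, rule ccontr)
      fix e assume "e \<in> E" "D e = 0" "\<not> (\<exists>u\<in>e. X u = 0)"
      then have "\<forall>u\<in>e. z u \<noteq> 0" using X_eq_0 by auto
      then have "e \<in> E'" using z_outside induced that \<open>e \<in> E\<close> by auto
      then have "D e \<noteq> 0"
        using \<open>\<forall>u\<in>e. z u \<noteq> 0\<close> sub \<open>lam \<noteq> 0\<close> \<open>beta \<noteq> 0\<close> finite_edge[OF \<open>e \<in> E\<close>]
        by (auto simp: D_def signed_subgraph_def)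
      then show False using \<open>D e = 0\<close> by simp
    qed
    show "\<forall>u\<in>V. X u \<noteq> 0 \<longrightarrow> lam * X u ^ k = (\<Sum>e\<in>{e\<in>E. u \<in> e}. D e)"
    proof (intro ballI impI)
      fix u assume "u \<in> V" "X u \<noteq> 0"
      then have "u \<in> V'" using X_eq_0 z_outside by auto
      have "lam * X u ^ k = lam / beta * (beta * z u ^ 2)"
        using X \<open>beta \<noteq> 0\<close> by simp
      also have "\<dots> = lam / beta * (\<Sum>e\<in>{e\<in>E'. u \<in> e}. complex_of_real (sg e) * prod z e)"
        using z_sums \<open>u \<in> V'\<close> by simp
      also have "\<dots> = (\<Sum>e\<in>{e\<in>E'. u \<in> e}. D e)"
        unfolding sum_distrib_left by (intro sum.cong) (auto simp: D_def)
      also have "\<dots> = (\<Sum>e\<in>{e\<in>E. u \<in> e}. D e)"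
        using sub finite_graph_edges
        by (intro sum.mono_neutral_left) (auto simp: D_def signed_subgraph_def)
      finally show "lam * X u ^ k = (\<Sum>e\<in>{e\<in>E. u \<in> e}. D e)" .
    qed
  qed
qed

lemma hyp_eigenvalue_pow_zero_iff:
  "hyp_eigenvalue k (pow_vertices V E k) (pow_edges E k) 0 \<longleftrightarrow> V \<noteq> {}"
proof
  assume "hyp_eigenvalue k (pow_vertices V E k) (pow_edges E k) 0"
  then have "pow_vertices V E k \<noteq> {}"
    unfolding hyp_eigenvalue_def by blast
  then show "V \<noteq> {}"
    using graph by (auto simp: graph_def pow_vertices_def)
next
  assume "V \<noteq> {}"
  then obtain u where "u \<in> V" by blast
  define x :: "'a + 'a set \<times> nat \<Rightarrow> complex" where "x i = (if i = Inl u then 1 else 0)" for i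
  have vanishing: "prod x (pow_edge e k - {v}) = 0" if "e \<in> E" "v \<in> pow_edge e k" for e v
  proof -
    have "card (pow_edge e k - {v}) = k - 1"
      using that card_pow_edge[OF card_edge[OF that(1)]] k finite_edge by simp
    then have "\<not> pow_edge e k - {v} \<subseteq> {Inl u}"
      using k card_mono[of "{Inl u}" "pow_edge e k - {v}"] by auto
    then show ?thesis
      using finite_edge[OF that(1)] by (auto simp: x_def)
  qed
  have "power_eigenvector V E k 0 x"
    unfolding power_eigenvector_def
  proof (intro conjI ballI allI impI)
    show "\<exists>i\<in>pow_vertices V E k. x i \<noteq> 0"
      using \<open>u \<in> V\<close> by (intro bexI[of _ "Inl u"]) (simp_all add: x_def pow_vertices_def)
    show "prod x (pow_edge e k - {Inr (e, j)}) = 0 * x (Inr (e, j)) ^ (k - 1)"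
      if "e \<in> E" "j < k - 2" for e j
      using vanishing that by simp
    show "(\<Sum>e\<in>{e\<in>E. v \<in> e}. prod x (pow_edge e k - {Inl v})) = 0 * x (Inl v) ^ (k - 1)" for v
      using vanishing by (simp add: sum.neutral)
  qed
  then show "hyp_eigenvalue k (pow_vertices V E k) (pow_edges E k) 0"
    using hyp_eigenvalue_pow_iff by blast
qed

lemma signed_eigenvalue_zero_iff:
  "(\<exists>V' E' sg beta. pow_signed_subgraph k V E V' E' sg \<and> signed_eigenvalue V' E' sg beta \<and> beta ^ 2 = 0)
     \<longleftrightarrow> V \<noteq> {}"
proof
  assume "\<exists>V' E' sg beta. pow_signed_subgraph k V E V' E' sg \<and> signed_eigenvalue V' E' sg beta \<and> beta ^ 2 = 0"
  then show "V \<noteq> {}"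
    by (auto simp: pow_signed_subgraph_iff signed_subgraph_def signed_eigenvalue_def)
next
  assume "V \<noteq> {}"
  then obtain u where "u \<in> V" by blast
  have "{e\<in>E. e \<subseteq> {u}} = {}"
  proof (rule equals0I)
    fix e assume e: "e \<in> {e\<in>E. e \<subseteq> {u}}"
    then have "card e \<le> card {u}" by (intro card_mono) auto
    then show False using card_edge e by simp
  qed
  then have "pow_signed_subgraph k V E {u} {} (\<lambda>_. 1)"
    using \<open>u \<in> V\<close> by (simp add: pow_signed_subgraph_iff signed_subgraph_def)
  moreover have "signed_eigenvalue {u} {} (\<lambda>_. 1) 0"
    unfolding signed_eigenvalue_def by (rule exI[of _ "\<lambda>_. 1"]) (simp add: signed_adj_def)
  ultimately show "\<exists>V' E' sg beta. pow_signed_subgraph k V E V' E' sg \<and> signed_eigenvalue V' E' sg beta \<and> beta ^ 2 = 0"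
    by force
qed

end

theorem theorem1:
  fixes V :: "'a set" and E :: "'a set set" and k :: nat and lam :: complex
  assumes "graph V E" and "k \<ge> 3"
  shows "hyp_eigenvalue k (pow_vertices V E k) (pow_edges E k) lam \<longleftrightarrow>
    (if k = 3 then
       (\<exists>V' E' sg beta. signed_induced_subgraph V E V' E' sg \<and>
          signed_eigenvalue V' E' sg beta \<and> beta ^ 2 = lam ^ k)
     else
       (\<exists>V' E' sg beta. signed_subgraph V E V' E' sg \<and>
          signed_eigenvalue V' E' sg beta \<and> beta ^ 2 = lam ^ k))"
proof -
  have "hyp_eigenvalue k (pow_vertices V E k) (pow_edges E k) lam \<longleftrightarrow>
    (\<exists>V' E' sg beta. pow_signed_subgraph k V E V' E' sg \<and>
       signed_eigenvalue V' E' sg beta \<and> beta ^ 2 = lam ^ k)"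
  proof (cases "lam = 0")
    case True
    then show ?thesis
      using hyp_eigenvalue_pow_zero_iff[OF assms] signed_eigenvalue_zero_iff[OF assms] assms(2)
      by (simp add: power_0_left)
  next
    case False
    then show ?thesis
      unfolding hyp_eigenvalue_pow_iff[OF assms]
      using signed_eigenvalue_of_power_eigenvector[OF assms] power_eigenvector_of_signed_eigenvalue[OF assms]
      by blast
  qed
  then show ?thesis
    by (cases "k = 3") (simp_all add: pow_signed_subgraph_def)
qed

end
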